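(* Let $\nu$ be a positive Radon measure on $\mathbb{R}$. Assume that the restriction $\mu=\nu|_{\mathbb{R}_+}$ of $\nu$ to $\mathbb{R}_+=[0,\infty)$ has finite moments of all orders and satisfies $\mu\big(\mathbb{R}_+\setminus[0,s_\mu)\big)=0$, where $s_\mu:=\sup\{x:x\in\mathrm{supp}(\mu)\}\in[0,\infty]$. Assume moreover that there is a constant $C>0$ such that \[ \int_{\mathbb{R}_-} t^{2n}\,d\nu(t)\le C\int_{\mathbb{R}_+} t^{2n}\,d\nu(t)\quad\text{for all } n\in\mathbb{N}, \] where $\mathbb{R}_-=\mathbb{R}\setminus\mathbb{R}_+$. Then the set \[ \Big\{\sum_{n=0}^\infty a_n t^n : a_n\ge 0,\ \text{the series }\sum_{n=0}^\infty a_n t^n\text{ converges in }L^2(\nu)\Big\} \] is a closed convex cone in $L^2(\nu)$.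
   Context: $\mathbb{N}=\{0,1,2,\dots\}$. A measure has finite moments of all orders if $\int t^n\,d\mu(t)<\infty$ for all $n\in\mathbb{N}$. Convergence of a series means norm convergence of its partial sums $\sum_{n=0}^N$ as $N\to\infty$. *)

theory Defs
  imports "HOL-Analysis.Analysis"
begin

definition radon_on_real :: "real measure \<Rightarrow> bool" where
  "radon_on_real M \<longleftrightarrow> sets M = sets borel \<and> (\<forall>K. compact K \<longrightarrow> emeasure M K < \<infinity>)"

definition restr_pos :: "real measure \<Rightarrow> real measure" where
  "restr_pos M = density M (indicator {0..})"

definition msupp :: "real measure \<Rightarrow> real set" where
  "msupp \<mu> = {x. \<forall>e>0. emeasure \<mu> (ball x e) > 0}"

text \<open>s_mu = sup of the support, in [0,oo] (taken to be 0 for empty support).\<close>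
definition supp_sup :: "real measure \<Rightarrow> ereal" where
  "supp_sup \<mu> = max 0 (SUP x\<in>msupp \<mu>. ereal x)"

text \<open>Representatives of elements of L^2(M).\<close>
definition L2 :: "real measure \<Rightarrow> (real \<Rightarrow> real) set" where
  "L2 M = {f. f \<in> borel_measurable M \<and> integrable M (\<lambda>t. (f t)^2)}"

definition L2_tendsto :: "real measure \<Rightarrow> (nat \<Rightarrow> real \<Rightarrow> real) \<Rightarrow> (real \<Rightarrow> real) \<Rightarrow> bool" where
  "L2_tendsto M F f \<longleftrightarrow> (\<forall>k. F k \<in> L2 M) \<and> f \<in> L2 M \<and>
     ((\<lambda>k. \<integral>\<^sup>+ t. ennreal ((F k t - f t)^2) \<partial>M) \<longlonglongrightarrow> 0)"

definition pos_series_set :: "real measure \<Rightarrow> (real \<Rightarrow> real) set" where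
  "pos_series_set M = {f. \<exists>a::nat \<Rightarrow> real. (\<forall>n. a n \<ge> 0) \<and>
      L2_tendsto M (\<lambda>N t. \<Sum>n\<le>N. a n * t ^ n) f}"

end

(* The cone and convexity properties come from the linearity of L^2 limits. For closedness,
   the hypotheses make nu a finite measure that is carried, up to a null set, by |t| < s_mu and
   gives positive mass to [x, oo) for every 0 <= x < s_mu. On [x, oo) a series with nonnegative
   coefficients dominates each of its terms, so an L^2-bounded family of such series has
   coefficients with a_n x^n <= sqrt (B / nu [x, oo)). A diagonal subsequence makes the
   coefficients converge, and Tannery's theorem identifies the L^2 limit almost everywhere with
   the limiting series sum b_n t^n. Finally, the moment comparison on the negative half-line,
   applied to the even and odd parts of sum b_n |t|^n, shows that this dominating function is
   square integrable, so the partial sums converge in L^2 by dominated convergence. *)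

theory Submission
  imports Defs "HOL-Library.Diagonal_Subsequence"
begin

section \<open>Limits and convergence in L2\<close>

lemma diagonal_convergent_subseq:
  fixes a :: "nat \<Rightarrow> nat \<Rightarrow> real"
  assumes "\<And>n. bounded (range (\<lambda>k. a k n))"
  obtains r b where "strict_mono r" "\<And>n. (\<lambda>j. a (r j) n) \<longlonglongrightarrow> b n"
proof -
  interpret subseqs "\<lambda>n s. convergent (\<lambda>j. a (s j) n)"
  proof
    fix n and s :: "nat \<Rightarrow> nat"
    have "bounded (range (\<lambda>j. a (s j) n))"
      using assms[of n] by (rule bounded_subset) auto
    then obtain l r where "strict_mono r" "((\<lambda>j. a (s j) n) \<circ> r) \<longlonglongrightarrow> l"
      using bounded_imp_convergent_subsequence by blast
    then show "\<exists>r. strict_mono r \<and> convergent (\<lambda>j. a ((s \<circ> r) j) n)"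
      by (auto simp: o_def convergent_def)
  qed
  have "convergent (\<lambda>j. a (diagseq j) n)" for n
  proof -
    have "convergent (\<lambda>j. a ((s \<circ> r) j) k)" if "strict_mono r" "convergent (\<lambda>j. a (s j) k)" for r s k
      using convergent_subseq_convergent[OF that(2,1)] by (simp add: o_def)
    then have "convergent (\<lambda>j. a ((diagseq \<circ> (+) (Suc n)) j) n)"
      by (rule diagseq_holds)
    then show ?thesis
      using convergent_ignore_initial_segment[of "\<lambda>j. a (diagseq j) n" "Suc n"]
      by (simp add: o_def add.commute)
  qed
  then have "(\<lambda>j. a (diagseq j) n) \<longlonglongrightarrow> lim (\<lambda>j. a (diagseq j) n)" for n
    by (simp add: convergent_LIMSEQ_iff)
  then show ?thesis
    by (rule that[OF subseq_diagseq])
qed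

lemma nn_integral_tendsto_zero_dominated:
  fixes u :: "nat \<Rightarrow> 'a \<Rightarrow> real"
  assumes [measurable]: "\<And>i. u i \<in> borel_measurable M" "w \<in> borel_measurable M"
    and "\<And>i x. 0 \<le> u i x" "\<And>i. AE x in M. u i x \<le> w x" "(\<integral>\<^sup>+ x. w x \<partial>M) < \<infinity>"
    and "AE x in M. (\<lambda>i. u i x) \<longlonglongrightarrow> 0"
  shows "(\<lambda>i. \<integral>\<^sup>+ x. ennreal (u i x) \<partial>M) \<longlonglongrightarrow> 0"
proof -
  have "(\<lambda>i. \<integral>\<^sup>+ x. ennreal (norm (0 - u i x)) \<partial>M) \<longlonglongrightarrow> 0"
    by (rule nn_integral_dominated_convergence_norm[where w=w]) (use assms in auto)
  then show ?thesis
    using assms(3) by simp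
qed

lemma square_add_le: "(x + y) ^ 2 \<le> 2 * x ^ 2 + 2 * (y::real) ^ 2"
proof -
  have "0 \<le> (x - y) ^ 2" by simp
  then show ?thesis by (simp add: power2_eq_square algebra_simps)
qed

lemma lincomb_square_le: "(\<alpha> * x + \<beta> * y) ^ 2 \<le> 2 * \<alpha>\<^sup>2 * x ^ 2 + 2 * \<beta>\<^sup>2 * (y::real) ^ 2"
  using square_add_le[of "\<alpha> * x" "\<beta> * y"] by (simp add: power_mult_distrib)

lemma ennreal_lincomb_square_le:
  "ennreal ((\<alpha> * x + \<beta> * y) ^ 2)
    \<le> ennreal (2 * \<alpha>\<^sup>2) * ennreal (x ^ 2) + ennreal (2 * \<beta>\<^sup>2) * ennreal ((y::real) ^ 2)"
  using lincomb_square_le[of \<alpha> x \<beta> y]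
  by (simp add: ennreal_mult[symmetric] ennreal_plus[symmetric] ennreal_leI del: ennreal_plus)

lemma L2_measurable: "f \<in> L2 M \<Longrightarrow> f \<in> borel_measurable M"
  and L2_integrable_square: "f \<in> L2 M \<Longrightarrow> integrable M (\<lambda>t. (f t) ^ 2)"
  by (simp_all add: L2_def)

lemma L2_lincomb:
  assumes "u \<in> L2 M" "v \<in> L2 M"
  shows "(\<lambda>t. \<alpha> * u t + \<beta> * v t) \<in> L2 M"
proof -
  have [measurable]: "u \<in> borel_measurable M" "v \<in> borel_measurable M"
    using assms by (simp_all add: L2_measurable)
  have "integrable M (\<lambda>t. 2 * \<alpha>\<^sup>2 * (u t) ^ 2 + 2 * \<beta>\<^sup>2 * (v t) ^ 2)"
    using assms by (intro Bochner_Integration.integrable_add Bochner_Integration.integrable_mult_right)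
      (simp_all add: L2_integrable_square)
  then have "integrable M (\<lambda>t. (\<alpha> * u t + \<beta> * v t) ^ 2)"
    by (rule Bochner_Integration.integrable_bound) (auto intro!: AE_I2 simp: lincomb_square_le)
  then show ?thesis by (simp add: L2_def)
qed

lemma L2_diff_square_integrable:
  "u \<in> L2 M \<Longrightarrow> v \<in> L2 M \<Longrightarrow> integrable M (\<lambda>t. (u t - v t) ^ 2)"
  using L2_lincomb[of u M v 1 "-1"] by (simp add: L2_def)

lemma L2_tendsto_lincomb:
  assumes F: "L2_tendsto M F f" and G: "L2_tendsto M G g"
  shows "L2_tendsto M (\<lambda>k t. \<alpha> * F k t + \<beta> * G k t) (\<lambda>t. \<alpha> * f t + \<beta> * g t)"
proof -
  let ?dF = "\<lambda>k. \<integral>\<^sup>+ t. ennreal ((F k t - f t) ^ 2) \<partial>M"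
  let ?dG = "\<lambda>k. \<integral>\<^sup>+ t. ennreal ((G k t - g t) ^ 2) \<partial>M"
  have [measurable]: "F k \<in> borel_measurable M" "f \<in> borel_measurable M"
    "G k \<in> borel_measurable M" "g \<in> borel_measurable M" for k
    using F G by (auto simp: L2_tendsto_def L2_def)
  have le: "(\<integral>\<^sup>+ t. ennreal ((\<alpha> * F k t + \<beta> * G k t - (\<alpha> * f t + \<beta> * g t)) ^ 2) \<partial>M)
      \<le> ennreal (2 * \<alpha>\<^sup>2) * ?dF k + ennreal (2 * \<beta>\<^sup>2) * ?dG k" for k
  proof -
    have "\<alpha> * F k t + \<beta> * G k t - (\<alpha> * f t + \<beta> * g t) = \<alpha> * (F k t - f t) + \<beta> * (G k t - g t)" for t
      by (simp add: algebra_simps)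
    then have "(\<integral>\<^sup>+ t. ennreal ((\<alpha> * F k t + \<beta> * G k t - (\<alpha> * f t + \<beta> * g t)) ^ 2) \<partial>M)
        \<le> (\<integral>\<^sup>+ t. ennreal (2 * \<alpha>\<^sup>2) * ennreal ((F k t - f t) ^ 2)
                + ennreal (2 * \<beta>\<^sup>2) * ennreal ((G k t - g t) ^ 2) \<partial>M)"
      by (simp only:) (intro nn_integral_mono ennreal_lincomb_square_le)
    also have "\<dots> = ennreal (2 * \<alpha>\<^sup>2) * ?dF k + ennreal (2 * \<beta>\<^sup>2) * ?dG k"
      by (simp add: nn_integral_add nn_integral_cmult)
    finally show ?thesis .
  qed
  have "(\<lambda>k. ennreal (2 * \<alpha>\<^sup>2) * ?dF k + ennreal (2 * \<beta>\<^sup>2) * ?dG k)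
      \<longlonglongrightarrow> ennreal (2 * \<alpha>\<^sup>2) * 0 + ennreal (2 * \<beta>\<^sup>2) * 0"
    using F G unfolding L2_tendsto_def by (intro tendsto_add tendsto_mult_ennreal tendsto_const) auto
  then have lim: "(\<lambda>k. ennreal (2 * \<alpha>\<^sup>2) * ?dF k + ennreal (2 * \<beta>\<^sup>2) * ?dG k) \<longlonglongrightarrow> 0"
    by simp
  have "(\<lambda>k. \<integral>\<^sup>+ t. ennreal ((\<alpha> * F k t + \<beta> * G k t - (\<alpha> * f t + \<beta> * g t)) ^ 2) \<partial>M)
      \<longlonglongrightarrow> 0"
    by (rule tendsto_sandwich[OF _ _ tendsto_const lim]) (simp_all add: le)
  moreover have "(\<lambda>t. \<alpha> * F k t + \<beta> * G k t) \<in> L2 M" for k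
    using F G by (simp add: L2_tendsto_def L2_lincomb)
  moreover have "(\<lambda>t. \<alpha> * f t + \<beta> * g t) \<in> L2 M"
    using F G by (simp add: L2_tendsto_def L2_lincomb)
  ultimately show ?thesis
    by (simp add: L2_tendsto_def)
qed

lemma L2_tendsto_subseq:
  assumes "L2_tendsto M F f" "strict_mono r"
  shows "L2_tendsto M (\<lambda>j. F (r j)) f"
  using assms LIMSEQ_subseq_LIMSEQ[where f=r and L=0
      and X="\<lambda>k. \<integral>\<^sup>+ t. ennreal ((F k t - f t) ^ 2) \<partial>M"]
  by (simp add: L2_tendsto_def o_def)

lemma L2_tendsto_integral:
  assumes F: "L2_tendsto M F f"
  shows "(\<lambda>k. \<integral>t. (F k t - f t) ^ 2 \<partial>M) \<longlonglongrightarrow> 0"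
proof -
  have [measurable]: "F k \<in> borel_measurable M" "f \<in> borel_measurable M" for k
    using F by (auto simp: L2_tendsto_def L2_def)
  have "(\<integral>t. (F k t - f t) ^ 2 \<partial>M) = enn2real (\<integral>\<^sup>+ t. ennreal ((F k t - f t) ^ 2) \<partial>M)" for k
    by (rule integral_eq_nn_integral) auto
  moreover have "(\<lambda>k. enn2real (\<integral>\<^sup>+ t. ennreal ((F k t - f t) ^ 2) \<partial>M)) \<longlonglongrightarrow> enn2real 0"
    using F unfolding L2_tendsto_def by (intro tendsto_enn2real) auto
  ultimately show ?thesis by simp
qed

lemma L2_tendsto_AE_subseq:
  assumes F: "L2_tendsto M F f"
  obtains r where "strict_mono r" "AE t in M. (\<lambda>j. F (r j) t) \<longlonglongrightarrow> f t"
proof -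
  have int: "integrable M (\<lambda>t. (F k t - f t) ^ 2)" for k
    using F by (simp add: L2_tendsto_def L2_diff_square_integrable)
  have "(\<lambda>k. \<integral>t. norm ((F k t - f t) ^ 2) \<partial>M) \<longlonglongrightarrow> 0"
    using L2_tendsto_integral[OF F] by simp
  from tendsto_L1_AE_subseq[OF int this] obtain r where r: "strict_mono r"
    and ae: "AE t in M. (\<lambda>j. (F (r j) t - f t) ^ 2) \<longlonglongrightarrow> 0"
    by auto
  from ae have "AE t in M. (\<lambda>j. F (r j) t) \<longlonglongrightarrow> f t"
  proof eventually_elim
    case (elim t)
    then have "(\<lambda>j. sqrt ((F (r j) t - f t) ^ 2)) \<longlonglongrightarrow> sqrt 0"
      by (rule tendsto_real_sqrt)
    then show ?case
      by (simp add: tendsto_rabs_zero_iff LIM_zero_iff)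
  qed
  with r show ?thesis by (rule that)
qed

lemma L2_tendsto_AE_limit_eq:
  assumes "L2_tendsto M F g" "AE t in M. (\<lambda>k. F k t) \<longlonglongrightarrow> h t"
  shows "AE t in M. g t = h t"
proof -
  obtain r where r: "strict_mono r" "AE t in M. (\<lambda>j. F (r j) t) \<longlonglongrightarrow> g t"
    using L2_tendsto_AE_subseq[OF assms(1)] by blast
  from assms(2) r(2) show ?thesis
  proof eventually_elim
    case (elim t)
    have "(\<lambda>j. F (r j) t) \<longlonglongrightarrow> h t"
      using LIMSEQ_subseq_LIMSEQ[OF elim(1) r(1)] by (simp add: o_def)
    with elim(2) show ?case
      by (rule LIMSEQ_unique)
  qed
qed

lemma L2_tendsto_integral_bounded:
  assumes F: "L2_tendsto M F g"
  obtains B where "\<And>k. (\<integral>t. (F k t) ^ 2 \<partial>M) \<le> B"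
proof -
  obtain K where K: "\<And>k. norm (\<integral>t. (F k t - g t) ^ 2 \<partial>M) \<le> K"
    using convergent_imp_Bseq[OF convergentI[OF L2_tendsto_integral[OF F]]] by (auto simp: Bseq_def)
  have "(\<integral>t. (F k t) ^ 2 \<partial>M) \<le> 2 * K + 2 * (\<integral>t. (g t) ^ 2 \<partial>M)" for k
  proof -
    have Fk: "F k \<in> L2 M" and g: "g \<in> L2 M" using F by (simp_all add: L2_tendsto_def)
    have "(\<integral>t. (F k t) ^ 2 \<partial>M) \<le> (\<integral>t. 2 * (F k t - g t) ^ 2 + 2 * (g t) ^ 2 \<partial>M)"
      using square_add_le[of "F k t - g t" "g t" for t] Fk g
      by (intro integral_mono Bochner_Integration.integrable_add Bochner_Integration.integrable_mult_right)
        (simp_all add: L2_diff_square_integrable L2_integrable_square)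
    also have "\<dots> = 2 * (\<integral>t. (F k t - g t) ^ 2 \<partial>M) + 2 * (\<integral>t. (g t) ^ 2 \<partial>M)"
      using Fk g by (simp add: L2_diff_square_integrable L2_integrable_square)
    also have "\<dots> \<le> 2 * K + 2 * (\<integral>t. (g t) ^ 2 \<partial>M)"
      using K[of k] by simp
    finally show ?thesis .
  qed
  then show ?thesis by (rule that)
qed

section \<open>Power series with nonnegative coefficients\<close>

lemma pos_series_set_nonneg_lincomb:
  assumes f: "f \<in> pos_series_set M" and g: "g \<in> pos_series_set M" and "0 \<le> \<alpha>" "0 \<le> \<beta>"
  shows "(\<lambda>t. \<alpha> * f t + \<beta> * g t) \<in> pos_series_set M"
proof -
  obtain a where a: "\<forall>n. 0 \<le> a n" "L2_tendsto M (\<lambda>N t. \<Sum>n\<le>N. a n * t ^ n) f"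
    using f by (auto simp: pos_series_set_def)
  obtain b where b: "\<forall>n. 0 \<le> b n" "L2_tendsto M (\<lambda>N t. \<Sum>n\<le>N. b n * t ^ n) g"
    using g by (auto simp: pos_series_set_def)
  have "(\<lambda>N t. \<alpha> * (\<Sum>n\<le>N. a n * t ^ n) + \<beta> * (\<Sum>n\<le>N. b n * t ^ n))
      = (\<lambda>N t. \<Sum>n\<le>N. (\<alpha> * a n + \<beta> * b n) * t ^ n)"
    by (simp add: sum_distrib_left sum.distrib distrib_right mult.assoc)
  then have "L2_tendsto M (\<lambda>N t. \<Sum>n\<le>N. (\<alpha> * a n + \<beta> * b n) * t ^ n) (\<lambda>t. \<alpha> * f t + \<beta> * g t)"
    using L2_tendsto_lincomb[OF a(2) b(2), of \<alpha> \<beta>] by simp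
  moreover have "\<forall>n. 0 \<le> \<alpha> * a n + \<beta> * b n"
    using a(1) b(1) assms(3,4) by simp
  ultimately show ?thesis
    unfolding pos_series_set_def by (intro CollectI exI[of _ "\<lambda>n. \<alpha> * a n + \<beta> * b n"] conjI)
qed

lemma pos_series_set_coeffs:
  assumes "\<And>k. F k \<in> pos_series_set M"
  shows "\<exists>a. (\<forall>k n. 0 \<le> a k n) \<and> (\<forall>k. L2_tendsto M (\<lambda>N t. \<Sum>n\<le>N. a k n * t ^ n) (F k))"
proof -
  have "\<forall>k. \<exists>a. (\<forall>n. 0 \<le> a n) \<and> L2_tendsto M (\<lambda>N t. \<Sum>n\<le>N. a n * t ^ n) (F k)"
    using assms by (simp add: pos_series_set_def)
  then obtain a where "\<forall>k. (\<forall>n. 0 \<le> a k n) \<and> L2_tendsto M (\<lambda>N t. \<Sum>n\<le>N. a k n * t ^ n) (F k)"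
    by (auto dest: choice)
  then show ?thesis
    by blast
qed

lemma abs_mult_power_le_geometric:
  fixes c r t D :: real
  assumes "0 \<le> c" "0 < r" "c * r ^ n \<le> D"
  shows "\<bar>c * t ^ n\<bar> \<le> D * (\<bar>t\<bar> / r) ^ n"
proof -
  have "\<bar>c * t ^ n\<bar> = c * r ^ n * (\<bar>t\<bar> / r) ^ n"
    using assms by (simp add: abs_mult power_abs power_divide)
  also have "\<dots> \<le> D * (\<bar>t\<bar> / r) ^ n"
    using assms by (intro mult_right_mono) auto
  finally show ?thesis .
qed

lemma summable_geometric_bound: "\<bar>t\<bar> < r \<Longrightarrow> summable (\<lambda>n. D * (\<bar>t\<bar> / r) ^ n :: real)"
  by (intro summable_mult summable_geometric) auto

lemma summable_abs_power_if_bounded: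
  fixes c :: "nat \<Rightarrow> real"
  assumes "\<And>n. 0 \<le> c n" "\<And>n. c n * r ^ n \<le> D" "\<bar>t\<bar> < r"
  shows "summable (\<lambda>n. \<bar>c n * t ^ n\<bar>)"
proof (rule summable_comparison_test)
  show "\<exists>N. \<forall>n\<ge>N. norm \<bar>c n * t ^ n\<bar> \<le> D * (\<bar>t\<bar> / r) ^ n"
    using abs_mult_power_le_geometric[of "c _" r] assms by force
  show "summable (\<lambda>n. D * (\<bar>t\<bar> / r) ^ n)"
    using assms(3) by (rule summable_geometric_bound)
qed

lemma abs_sum_atMost_diff_suminf_le:
  fixes c :: "nat \<Rightarrow> real"
  assumes "summable (\<lambda>n. \<bar>c n\<bar>)"
  shows "\<bar>(\<Sum>n\<le>N. c n) - (\<Sum>n. c n)\<bar> \<le> 2 * (\<Sum>n. \<bar>c n\<bar>)"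
proof -
  have "\<bar>\<Sum>n\<le>N. c n\<bar> \<le> (\<Sum>n. \<bar>c n\<bar>)"
    by (rule order.trans[OF sum_abs sum_le_suminf[OF assms]]) auto
  moreover have "\<bar>\<Sum>n. c n\<bar> \<le> (\<Sum>n. \<bar>c n\<bar>)"
    using assms by (rule summable_rabs)
  ultimately show ?thesis
    by linarith
qed

lemma nonneg_power_sum_le_subseq_limit:
  fixes a :: "nat \<Rightarrow> real"
  assumes "\<And>n. 0 \<le> a n" "0 \<le> t" "strict_mono r"
    and lim: "(\<lambda>j. \<Sum>k\<le>r j. a k * t ^ k) \<longlonglongrightarrow> L"
  shows "(\<Sum>k\<le>N. a k * t ^ k) \<le> L"
proof (rule tendsto_lowerbound[OF lim])
  show "\<forall>\<^sub>F j in sequentially. (\<Sum>k\<le>N. a k * t ^ k) \<le> (\<Sum>k\<le>r j. a k * t ^ k)"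
  proof (rule eventually_sequentiallyI[of N])
    fix j assume "N \<le> j"
    then have "N \<le> r j" using seq_suble[OF assms(3), of j] by simp
    then show "(\<Sum>k\<le>N. a k * t ^ k) \<le> (\<Sum>k\<le>r j. a k * t ^ k)"
      using assms by (intro sum_mono2) auto
  qed
qed simp

lemma power_series_coeff_bound:
  fixes a :: "nat \<Rightarrow> real"
  assumes "finite_measure M" "sets M = sets borel" "\<And>n. 0 \<le> a n" "0 \<le> x"
    and L: "L2_tendsto M (\<lambda>N t. \<Sum>n\<le>N. a n * t ^ n) F"
  shows "(a n * x ^ n) ^ 2 * measure M {x..} \<le> (\<integral>t. (F t) ^ 2 \<partial>M)"
proof -
  interpret finite_measure M by fact
  obtain r where r: "strict_mono r" and ae: "AE t in M. (\<lambda>j. \<Sum>k\<le>r j. a k * t ^ k) \<longlonglongrightarrow> F t"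
    using L2_tendsto_AE_subseq[OF L] by blast
  have "AE t in M. (a n * x ^ n) ^ 2 * indicator {x..} t \<le> (F t) ^ 2"
    using ae
  proof eventually_elim
    case (elim t)
    show ?case
    proof (cases "x \<le> t")
      case True
      have "a n * x ^ n \<le> a n * t ^ n"
        using assms True by (intro mult_left_mono power_mono) auto
      also have "\<dots> \<le> (\<Sum>k\<le>n. a k * t ^ k)"
        using assms True by (intro member_le_sum) auto
      also have "\<dots> \<le> F t"
        using assms True by (intro nonneg_power_sum_le_subseq_limit[OF _ _ r elim]) auto
      finally show ?thesis
        using assms True by (simp add: power_mono)
    qed simp
  qed
  then have "(\<integral>t. (a n * x ^ n) ^ 2 * indicator {x..} t \<partial>M) \<le> (\<integral>t. (F t) ^ 2 \<partial>M)"
    using L assms(2)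
    by (intro integral_mono_AE Bochner_Integration.integrable_mult_right integrable_real_indicator)
      (auto simp: L2_tendsto_def L2_def emeasure_eq_measure)
  then show ?thesis
    using assms(2) by simp
qed

lemma tendsto_power_series_dominated:
  fixes a :: "nat \<Rightarrow> nat \<Rightarrow> real"
  assumes "\<And>j k. 0 \<le> a j k" "\<And>k. (\<lambda>j. a j k) \<longlonglongrightarrow> b k" "\<And>j k. a j k * x ^ k \<le> D"
    and "\<bar>t\<bar> < x"
  shows "(\<lambda>j. \<Sum>k. a j k * t ^ k) \<longlonglongrightarrow> (\<Sum>k. b k * t ^ k)"
proof (rule tannerys_theorem[THEN conjunct2, THEN conjunct2])
  show "(\<lambda>j. a j k * t ^ k) \<longlonglongrightarrow> b k * t ^ k" for k
    using assms(2) by (rule tendsto_mult_right)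
  show "\<forall>\<^sub>F (k, j) in at_top \<times>\<^sub>F sequentially. norm (a j k * t ^ k) \<le> D * (\<bar>t\<bar> / x) ^ k"
    using assms abs_mult_power_le_geometric[of "a _ _" x] by (intro always_eventually) auto
  show "summable (\<lambda>k. D * (\<bar>t\<bar> / x) ^ k)"
    using assms(4) by (rule summable_geometric_bound)
qed simp

lemma square_sum_same_parity:
  fixes b :: "nat \<Rightarrow> real"
  assumes "\<And>i j. i \<in> I \<Longrightarrow> j \<in> I \<Longrightarrow> even (i + j)"
  shows "(\<Sum>i\<in>I. b i * \<bar>t\<bar> ^ i) ^ 2
    = (\<Sum>p\<in>I \<times> I. (b (fst p) * b (snd p)) * t ^ (2 * ((fst p + snd p) div 2)))"
proof -
  have "(\<Sum>i\<in>I. b i * \<bar>t\<bar> ^ i) ^ 2 = (\<Sum>i\<in>I. \<Sum>j\<in>I. (b i * \<bar>t\<bar> ^ i) * (b j * \<bar>t\<bar> ^ j))"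
    by (simp only: power2_eq_square sum_product)
  also have "\<dots> = (\<Sum>p\<in>I \<times> I. (b (fst p) * \<bar>t\<bar> ^ fst p) * (b (snd p) * \<bar>t\<bar> ^ snd p))"
    by (simp only: sum.cartesian_product case_prod_unfold)
  also have "\<dots> = (\<Sum>p\<in>I \<times> I. (b (fst p) * b (snd p)) * t ^ (2 * ((fst p + snd p) div 2)))"
  proof (rule sum.cong)
    fix p assume "p \<in> I \<times> I"
    then have "even (fst p + snd p)"
      using assms by (cases p) auto
    then have "\<bar>t\<bar> ^ fst p * \<bar>t\<bar> ^ snd p = t ^ (2 * ((fst p + snd p) div 2))"
      by (simp only: power_add[symmetric] power_even_abs even_two_times_div_two)
    then show "(b (fst p) * \<bar>t\<bar> ^ fst p) * (b (snd p) * \<bar>t\<bar> ^ snd p)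
        = (b (fst p) * b (snd p)) * t ^ (2 * ((fst p + snd p) div 2))"
      by (simp only: mult_ac)
  qed simp
  finally show ?thesis .
qed

section \<open>Measures whose negative moments are dominated\<close>

locale moment_comparison =
  fixes \<nu> :: "real measure" and C :: real
  assumes sets_eq: "sets \<nu> = sets borel"
    and moments: "\<forall>n::nat. (\<integral>\<^sup>+ t. ennreal (t ^ n) \<partial>(restr_pos \<nu>)) < \<infinity>"
    and no_mass_at_end: "emeasure (restr_pos \<nu>) {t. 0 \<le> t \<and> supp_sup (restr_pos \<nu>) \<le> ereal t} = 0"
    and neg_bound: "\<forall>n::nat. (\<integral>\<^sup>+ t. ennreal (t ^ (2*n)) * indicator {..<0} t \<partial>\<nu>)
                     \<le> ennreal C * (\<integral>\<^sup>+ t. ennreal (t ^ (2*n)) * indicator {0..} t \<partial>\<nu>)"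
begin

abbreviation s_mu :: ereal where "s_mu \<equiv> supp_sup (restr_pos \<nu>)"

declare sets_eq [measurable_cong, simp]

lemma nn_integral_restr_pos:
  "g \<in> borel_measurable borel \<Longrightarrow> (\<integral>\<^sup>+ t. g t \<partial>restr_pos \<nu>) = (\<integral>\<^sup>+ t. g t * indicator {0..} t \<partial>\<nu>)"
  unfolding restr_pos_def by (subst nn_integral_density) (auto simp: mult.commute)

lemma emeasure_restr_pos:
  "A \<in> sets borel \<Longrightarrow> emeasure (restr_pos \<nu>) A = emeasure \<nu> (A \<inter> {0..})"
  unfolding restr_pos_def
  by (simp add: emeasure_density indicator_inter_arith[symmetric] mult.commute)

lemma nn_integral_split_sign:
  assumes [measurable]: "g \<in> borel_measurable borel"
  shows "(\<integral>\<^sup>+ t. g t \<partial>\<nu>) = (\<integral>\<^sup>+ t. g t * indicator {..<0} t \<partial>\<nu>) + (\<integral>\<^sup>+ t. g t * indicator {0..} t \<partial>\<nu>)"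
proof -
  have "(\<integral>\<^sup>+ t. g t \<partial>\<nu>) = (\<integral>\<^sup>+ t. g t * indicator {..<0} t + g t * indicator {0..} t \<partial>\<nu>)"
    by (rule nn_integral_cong) (auto simp: indicator_def)
  then show ?thesis
    by (simp add: nn_integral_add)
qed

lemma even_moment_finite: "(\<integral>\<^sup>+ t. ennreal (t ^ (2 * n)) \<partial>\<nu>) < \<infinity>"
proof -
  let ?pos = "\<integral>\<^sup>+ t. ennreal (t ^ (2 * n)) * indicator {0..} t \<partial>\<nu>"
  have "(\<integral>\<^sup>+ t. ennreal (t ^ (2 * n)) \<partial>\<nu>) \<le> ennreal C * ?pos + ?pos"
    using neg_bound nn_integral_split_sign[of "\<lambda>t. ennreal (t ^ (2 * n))"] by (simp add: add_right_mono)
  also have "\<dots> < \<infinity>"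
    using moments[rule_format, of "2 * n"] nn_integral_restr_pos[of "\<lambda>t. ennreal (t ^ (2 * n))"]
    by (simp add: ennreal_mult_less_top)
  finally show ?thesis .
qed

lemma finite_measure_nu: "finite_measure \<nu>"
  using even_moment_finite[of 0] by (intro finite_measureI) simp

sublocale finite_measure \<nu>
  by (rule finite_measure_nu)

lemma integrable_power: "integrable \<nu> (\<lambda>t. t ^ n)"
proof (rule Bochner_Integration.integrable_bound)
  have "integrable \<nu> (\<lambda>t. t ^ (2 * n))"
    using even_moment_finite[of n] by (intro integrableI_nonneg) (auto simp: power_mult)
  then show "integrable \<nu> (\<lambda>t. 1 + t ^ (2 * n))"
    by simp
  show "AE t in \<nu>. norm (t ^ n) \<le> norm (1 + t ^ (2 * n))"
  proof (rule AE_I2)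
    fix t :: real
    have "0 \<le> (\<bar>t\<bar> ^ n - 1) ^ 2" by simp
    then have "2 * \<bar>t\<bar> ^ n \<le> 1 + (\<bar>t\<bar> ^ n) ^ 2"
      by (simp add: power2_eq_square algebra_simps)
    also have "(\<bar>t\<bar> ^ n) ^ 2 = t ^ (2 * n)"
      by (simp add: power_mult[symmetric] mult.commute power_even_abs)
    finally have "\<bar>t\<bar> ^ n \<le> 1 + t ^ (2 * n)"
      using zero_le_power[of "\<bar>t\<bar>" n] by linarith
    moreover have "0 \<le> t ^ (2 * n)"
      by (simp add: power_mult)
    ultimately show "norm (t ^ n) \<le> norm (1 + t ^ (2 * n))"
      by (simp add: power_abs)
  qed
qed simp

lemma power_sum_L2: "(\<lambda>t. \<Sum>n\<le>N. a n * t ^ n) \<in> L2 \<nu>"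
proof -
  have "(\<Sum>n\<le>N. a n * t ^ n) ^ 2 = (\<Sum>n\<le>N. \<Sum>m\<le>N. (a n * a m) * t ^ (n + m))" for t :: real
    by (simp add: power2_eq_square sum_product power_add mult_ac)
  then show ?thesis
    by (simp add: L2_def integrable_power)
qed

lemma nn_integral_even_poly:
  assumes "finite I" "\<And>i. i \<in> I \<Longrightarrow> 0 \<le> w i" "S \<in> sets borel"
  shows "(\<integral>\<^sup>+ t. ennreal (\<Sum>i\<in>I. w i * t ^ (2 * e i)) * indicator S t \<partial>\<nu>)
    = (\<Sum>i\<in>I. ennreal (w i) * (\<integral>\<^sup>+ t. ennreal (t ^ (2 * e i)) * indicator S t \<partial>\<nu>))"
proof -
  have "ennreal (\<Sum>i\<in>I. w i * t ^ (2 * e i)) = (\<Sum>i\<in>I. ennreal (w i) * ennreal (t ^ (2 * e i)))" for t :: real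
    using assms(2) by (simp add: sum_ennreal[symmetric] ennreal_mult power_mult)
  then have "(\<integral>\<^sup>+ t. ennreal (\<Sum>i\<in>I. w i * t ^ (2 * e i)) * indicator S t \<partial>\<nu>)
      = (\<integral>\<^sup>+ t. (\<Sum>i\<in>I. ennreal (w i) * (ennreal (t ^ (2 * e i)) * indicator S t)) \<partial>\<nu>)"
    by (simp add: sum_distrib_right mult.assoc)
  also have "\<dots> = (\<Sum>i\<in>I. ennreal (w i) * (\<integral>\<^sup>+ t. ennreal (t ^ (2 * e i)) * indicator S t \<partial>\<nu>))"
    using assms(3) by (simp add: nn_integral_sum nn_integral_cmult)
  finally show ?thesis .
qed

lemma nn_integral_neg_le_even_poly:
  assumes "finite I" "\<And>i. i \<in> I \<Longrightarrow> 0 \<le> w i"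
  shows "(\<integral>\<^sup>+ t. ennreal (\<Sum>i\<in>I. w i * t ^ (2 * e i)) * indicator {..<0} t \<partial>\<nu>)
    \<le> ennreal C * (\<integral>\<^sup>+ t. ennreal (\<Sum>i\<in>I. w i * t ^ (2 * e i)) * indicator {0..} t \<partial>\<nu>)"
proof -
  have "(\<Sum>i\<in>I. ennreal (w i) * (\<integral>\<^sup>+ t. ennreal (t ^ (2 * e i)) * indicator {..<0} t \<partial>\<nu>))
    \<le> (\<Sum>i\<in>I. ennreal (w i) * (ennreal C * (\<integral>\<^sup>+ t. ennreal (t ^ (2 * e i)) * indicator {0..} t \<partial>\<nu>)))"
    using neg_bound by (intro sum_mono mult_left_mono) auto
  then show ?thesis
    by (simp add: nn_integral_even_poly[OF assms] sum_distrib_left mult.left_commute)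
qed

lemma s_mu_nonneg: "0 \<le> s_mu"
  by (simp add: supp_sup_def)

lemma measure_atLeast_pos:
  assumes "0 \<le> x" "ereal x < s_mu"
  shows "0 < measure \<nu> {x..}"
proof -
  obtain y where "y \<in> msupp (restr_pos \<nu>)" "x < y"
    using assms by (auto simp: supp_sup_def less_max_iff_disj less_SUP_iff)
  then have "0 < emeasure (restr_pos \<nu>) (ball y (y - x))"
    by (auto simp: msupp_def)
  also have "\<dots> \<le> emeasure (restr_pos \<nu>) {x..}"
    by (rule emeasure_mono) (auto simp: ball_def dist_real_def restr_pos_def)
  also have "\<dots> = emeasure \<nu> {x..}"
    using assms(1) by (simp add: emeasure_restr_pos Int_absorb2)
  finally show ?thesis
    by (simp add: emeasure_eq_measure)
qed

lemma emeasure_atLeast_s_mu: "emeasure \<nu> {t. 0 \<le> t \<and> s_mu \<le> ereal t} = 0"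
proof -
  have "{t. 0 \<le> t \<and> s_mu \<le> ereal t} \<in> sets borel"
    by measurable
  moreover have "{t. 0 \<le> t \<and> s_mu \<le> ereal t} \<inter> {0..} = {t. 0 \<le> t \<and> s_mu \<le> ereal t}"
    by auto
  ultimately show ?thesis
    using no_mass_at_end by (simp add: emeasure_restr_pos)
qed

lemma emeasure_atMost_neg_le:
  assumes "0 < \<rho>"
  shows "emeasure \<nu> {..-\<rho>} \<le> ennreal C * (\<integral>\<^sup>+ t. ennreal ((t / \<rho>) ^ (2 * n)) * indicator {0..} t \<partial>\<nu>)"
proof -
  have "emeasure \<nu> {..-\<rho>} = (\<integral>\<^sup>+ t. indicator {..-\<rho>} t \<partial>\<nu>)"
    by simp
  also have "\<dots> \<le> (\<integral>\<^sup>+ t. ennreal ((t / \<rho>) ^ (2 * n)) * indicator {..<0} t \<partial>\<nu>)"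
  proof (rule nn_integral_mono)
    fix t :: real
    show "indicator {..-\<rho>} t \<le> ennreal ((t / \<rho>) ^ (2 * n)) * indicator {..<0} t"
    proof (cases "t \<le> -\<rho>")
      case True
      then have "1 \<le> \<bar>t / \<rho>\<bar> ^ (2 * n)"
        using assms by (intro one_le_power) (simp add: abs_div divide_le_eq)
      then show ?thesis
        using True assms by (simp add: power_even_abs)
    qed simp
  qed
  also have "\<dots> \<le> ennreal C * (\<integral>\<^sup>+ t. ennreal ((t / \<rho>) ^ (2 * n)) * indicator {0..} t \<partial>\<nu>)"
    using nn_integral_neg_le_even_poly[of "{0::nat}" "\<lambda>_. 1 / \<rho> ^ (2 * n)" "\<lambda>_. n"]
    by (simp add: power_divide)
  finally show ?thesis .
qed

lemma nn_integral_scaled_even_power_tendsto_zero: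
  assumes "0 < \<sigma>" "emeasure \<nu> {\<sigma>..} = 0"
  shows "(\<lambda>n. \<integral>\<^sup>+ t. ennreal ((t / \<sigma>) ^ (2 * n)) * indicator {0..} t \<partial>\<nu>) \<longlonglongrightarrow> 0"
proof -
  have "AE t in \<nu>. t \<notin> {\<sigma>..}"
    using assms(2) by (intro AE_not_in null_setsI) auto
  then have "(\<integral>\<^sup>+ t. ennreal ((t / \<sigma>) ^ (2 * n)) * indicator {0..} t \<partial>\<nu>)
      = (\<integral>\<^sup>+ t. ennreal ((t / \<sigma>) ^ (2 * n) * indicator {0..<\<sigma>} t) \<partial>\<nu>)" for n
    by (intro nn_integral_cong_AE) (auto elim!: eventually_mono simp: indicator_def)
  moreover have "(\<lambda>n. \<integral>\<^sup>+ t. ennreal ((t / \<sigma>) ^ (2 * n) * indicator {0..<\<sigma>} t) \<partial>\<nu>) \<longlonglongrightarrow> 0"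
  proof (rule nn_integral_tendsto_zero_dominated[where w="indicator {0..<\<sigma>}"])
    show "0 \<le> (t / \<sigma>) ^ (2 * n) * indicator {0..<\<sigma>} t" for n t
      by (simp add: power_mult)
    show "AE t in \<nu>. (t / \<sigma>) ^ (2 * n) * indicator {0..<\<sigma>} t \<le> indicator {0..<\<sigma>} t" for n
      using assms(1) by (intro AE_I2) (simp add: indicator_def power_le_one)
    show "(\<integral>\<^sup>+ t. ennreal (indicator {0..<\<sigma>} t) \<partial>\<nu>) < \<infinity>"
      by (simp add: ennreal_indicator less_top[symmetric])
    have "(\<lambda>n. ((t / \<sigma>) ^ 2) ^ n) \<longlonglongrightarrow> 0" if "0 \<le> t" "t < \<sigma>" for t
      using that assms(1) by (intro LIMSEQ_power_zero) (simp add: power_less_one_iff abs_square_less_1)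
    then show "AE t in \<nu>. (\<lambda>n. (t / \<sigma>) ^ (2 * n) * indicator {0..<\<sigma>} t) \<longlonglongrightarrow> 0"
      by (intro AE_I2) (simp add: indicator_def power_mult)
  qed simp_all
  ultimately show ?thesis
    by simp
qed

lemma emeasure_neg_tail_zero:
  assumes "0 \<le> \<sigma>" and pos_null: "emeasure \<nu> {\<sigma>..} = 0"
  shows "emeasure \<nu> {t. t < 0 \<and> \<sigma> \<le> - t} = 0"
proof (cases "\<sigma> = 0")
  case True
  have "emeasure \<nu> {..<0} \<le> ennreal C * emeasure \<nu> {0..}"
    using neg_bound[rule_format, of 0] by simp
  moreover have "{t. t < 0 \<and> \<sigma> \<le> - t} = {..<0}"
    using True by auto
  ultimately show ?thesis
    using True pos_null by simp
next
  case False
  then have "0 < \<sigma>"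
    using assms(1) by simp
  have "(\<lambda>n. ennreal C * (\<integral>\<^sup>+ t. ennreal ((t / \<sigma>) ^ (2 * n)) * indicator {0..} t \<partial>\<nu>))
      \<longlonglongrightarrow> ennreal C * 0"
    using nn_integral_scaled_even_power_tendsto_zero[OF \<open>0 < \<sigma>\<close> pos_null]
    by (intro tendsto_mult_ennreal tendsto_const) auto
  then have "emeasure \<nu> {..-\<sigma>} \<le> ennreal C * 0"
    by (rule tendsto_lowerbound) (use emeasure_atMost_neg_le[OF \<open>0 < \<sigma>\<close>] in auto)
  moreover have "{t. t < 0 \<and> \<sigma> \<le> - t} = {..-\<sigma>}"
    using \<open>0 < \<sigma>\<close> by auto
  ultimately show ?thesis
    by simp
qed

lemma AE_abs_less_s_mu: "AE t in \<nu>. ereal \<bar>t\<bar> < s_mu"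
proof (cases s_mu)
  case (real \<sigma>)
  then have "0 \<le> \<sigma>"
    using s_mu_nonneg by simp
  have "{t. 0 \<le> t \<and> s_mu \<le> ereal t} = {\<sigma>..}"
    using real \<open>0 \<le> \<sigma>\<close> by auto
  then have pos: "emeasure \<nu> {\<sigma>..} = 0"
    using emeasure_atLeast_s_mu by simp
  have neg: "emeasure \<nu> {t. t < 0 \<and> \<sigma> \<le> - t} = 0"
    using \<open>0 \<le> \<sigma>\<close> pos by (rule emeasure_neg_tail_zero)
  show ?thesis
  proof (rule AE_I')
    show "{\<sigma>..} \<union> {t. t < 0 \<and> \<sigma> \<le> - t} \<in> null_sets \<nu>"
      using pos neg by (intro null_sets.Un null_setsI) auto
    show "{t \<in> space \<nu>. \<not> ereal \<bar>t\<bar> < s_mu} \<subseteq> {\<sigma>..} \<union> {t. t < 0 \<and> \<sigma> \<le> - t}"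
      using real by auto
  qed
qed (use s_mu_nonneg in auto)

lemma coeff_power_le:
  assumes "\<And>n. 0 \<le> a n" "L2_tendsto \<nu> (\<lambda>N t. \<Sum>n\<le>N. a n * t ^ n) F"
    and "(\<integral>t. (F t) ^ 2 \<partial>\<nu>) \<le> B" "0 \<le> x" "ereal x < s_mu"
  shows "a n * x ^ n \<le> sqrt (B / measure \<nu> {x..})"
proof -
  have m: "0 < measure \<nu> {x..}"
    using assms(4,5) by (rule measure_atLeast_pos)
  have "(a n * x ^ n) ^ 2 * measure \<nu> {x..} \<le> B"
    using power_series_coeff_bound[OF finite_measure_nu sets_eq assms(1,4,2), where n=n] assms(3)
    by linarith
  then have "(a n * x ^ n) ^ 2 \<le> B / measure \<nu> {x..}"
    using m by (simp add: pos_le_divide_eq)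
  then have "sqrt ((a n * x ^ n) ^ 2) \<le> sqrt (B / measure \<nu> {x..})"
    by (rule real_sqrt_le_mono)
  then show ?thesis
    using assms(1,4) by simp
qed

lemma summable_abs_power_inside:
  assumes "\<And>n. 0 \<le> b n" "\<And>x n. 0 \<le> x \<Longrightarrow> ereal x < s_mu \<Longrightarrow> b n * x ^ n \<le> D x"
    and "ereal \<bar>t\<bar> < s_mu"
  shows "summable (\<lambda>n. \<bar>b n * t ^ n\<bar>)"
proof -
  obtain x where "ereal \<bar>t\<bar> < ereal x" "ereal x < s_mu"
    using ereal_dense2[OF assms(3)] by blast
  then show ?thesis
    using assms(1,2) by (intro summable_abs_power_if_bounded[where r=x and D="D x"]) auto
qed

lemma pos_series_AE_sums:
  assumes a: "\<And>n. 0 \<le> a n" and L: "L2_tendsto \<nu> (\<lambda>N t. \<Sum>n\<le>N. a n * t ^ n) F"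
  shows "AE t in \<nu>. (\<lambda>n. a n * t ^ n) sums F t"
proof -
  obtain r where r: "strict_mono r" and ae: "AE t in \<nu>. (\<lambda>j. \<Sum>n\<le>r j. a n * t ^ n) \<longlonglongrightarrow> F t"
    using L2_tendsto_AE_subseq[OF L] by blast
  from ae AE_abs_less_s_mu show ?thesis
  proof eventually_elim
    case (elim t)
    have "summable (\<lambda>n. a n * t ^ n)"
      using summable_abs_power_inside[OF a coeff_power_le[OF a L order.refl] elim(2)]
      by (rule summable_rabs_cancel)
    then have "(\<lambda>N. \<Sum>n\<le>N. a n * t ^ n) \<longlonglongrightarrow> (\<Sum>n. a n * t ^ n)"
      by (simp add: summable_sums sums_def_le[symmetric])
    then have "(\<lambda>j. \<Sum>n\<le>r j. a n * t ^ n) \<longlonglongrightarrow> (\<Sum>n. a n * t ^ n)"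
      using LIMSEQ_subseq_LIMSEQ[OF _ r] by (simp add: o_def)
    with elim(1) have "F t = (\<Sum>n. a n * t ^ n)"
      by (rule LIMSEQ_unique)
    with \<open>summable (\<lambda>n. a n * t ^ n)\<close> show ?case
      by (simp add: summable_sums)
  qed
qed

(* Same parity turns the square into a polynomial in t^2 with nonnegative coefficients,
   to which neg_bound applies termwise. *)
lemma nn_integral_same_parity_square_le:
  assumes "finite J" "I \<subseteq> J" "\<And>i j. i \<in> I \<Longrightarrow> j \<in> I \<Longrightarrow> even (i + j)" "\<And>j. j \<in> J \<Longrightarrow> 0 \<le> b j"
  shows "(\<integral>\<^sup>+ t. ennreal ((\<Sum>i\<in>I. b i * \<bar>t\<bar> ^ i) ^ 2) \<partial>\<nu>)
    \<le> (ennreal C + 1) * (\<integral>\<^sup>+ t. ennreal ((\<Sum>j\<in>J. b j * \<bar>t\<bar> ^ j) ^ 2) * indicator {0..} t \<partial>\<nu>)"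
proof -
  let ?s = "\<lambda>I t. \<Sum>i\<in>I. b i * \<bar>t\<bar> ^ i"
  let ?pos = "\<lambda>I. \<integral>\<^sup>+ t. ennreal ((?s I t) ^ 2) * indicator {0..} t \<partial>\<nu>"
  have "finite I"
    using assms(2,1) by (rule finite_subset)
  have nonneg: "0 \<le> b i" if "i \<in> I" for i
    using that assms(2,4) by auto
  have square_eq: "(?s I t) ^ 2 = (\<Sum>p\<in>I \<times> I. (b (fst p) * b (snd p)) * t ^ (2 * ((fst p + snd p) div 2)))"
    for t
    using assms(3) by (rule square_sum_same_parity)
  have "(\<integral>\<^sup>+ t. ennreal ((?s I t) ^ 2) * indicator {..<0} t \<partial>\<nu>) \<le> ennreal C * ?pos I"
    unfolding square_eq
    by (rule nn_integral_neg_le_even_poly) (use \<open>finite I\<close> nonneg in \<open>auto intro: mult_nonneg_nonneg\<close>)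
  then have "(\<integral>\<^sup>+ t. ennreal ((?s I t) ^ 2) \<partial>\<nu>) \<le> (ennreal C + 1) * ?pos I"
    by (simp add: nn_integral_split_sign[of "\<lambda>t. ennreal ((?s I t) ^ 2)"] add_right_mono distrib_right)
  also have "\<dots> \<le> (ennreal C + 1) * ?pos J"
  proof (intro mult_left_mono nn_integral_mono)
    fix t
    have "(?s I t) ^ 2 \<le> (?s J t) ^ 2"
      using assms by (intro power_mono sum_mono2 sum_nonneg) auto
    then show "ennreal ((?s I t) ^ 2) * indicator {0..} t \<le> ennreal ((?s J t) ^ 2) * indicator {0..} t"
      by (intro mult_right_mono ennreal_leI) auto
  qed simp
  finally show ?thesis .
qed

lemma nn_integral_abs_power_sum_square_le:
  assumes "\<And>n. 0 \<le> b n"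
  shows "(\<integral>\<^sup>+ t. ennreal ((\<Sum>n\<le>N. b n * \<bar>t\<bar> ^ n) ^ 2) \<partial>\<nu>)
    \<le> 4 * (ennreal C + 1) * (\<integral>\<^sup>+ t. ennreal ((\<Sum>n\<le>N. b n * \<bar>t\<bar> ^ n) ^ 2) * indicator {0..} t \<partial>\<nu>)"
proof -
  define evens where "evens = {n \<in> {..N}. even n}"
  define odds where "odds = {n \<in> {..N}. odd n}"
  let ?s = "\<lambda>I t. \<Sum>n\<in>I. b n * \<bar>t\<bar> ^ n"
  let ?pos = "\<integral>\<^sup>+ t. ennreal ((?s {..N} t) ^ 2) * indicator {0..} t \<partial>\<nu>"
  have "{..N} = evens \<union> odds"
    by (auto simp: evens_def odds_def)
  then have "?s {..N} t = 1 * ?s evens t + 1 * ?s odds t" for t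
    by (simp only: mult_1) (rule sum.union_disjoint, auto simp: evens_def odds_def)
  then have "ennreal ((?s {..N} t) ^ 2) \<le> 2 * ennreal ((?s evens t) ^ 2) + 2 * ennreal ((?s odds t) ^ 2)" for t
    using ennreal_lincomb_square_le[of 1 "?s evens t" 1 "?s odds t"] by simp
  then have "(\<integral>\<^sup>+ t. ennreal ((?s {..N} t) ^ 2) \<partial>\<nu>)
      \<le> (\<integral>\<^sup>+ t. 2 * ennreal ((?s evens t) ^ 2) + 2 * ennreal ((?s odds t) ^ 2) \<partial>\<nu>)"
    by (rule nn_integral_mono)
  also have "\<dots> = 2 * (\<integral>\<^sup>+ t. ennreal ((?s evens t) ^ 2) \<partial>\<nu>) + 2 * (\<integral>\<^sup>+ t. ennreal ((?s odds t) ^ 2) \<partial>\<nu>)"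
    by (simp add: nn_integral_add nn_integral_cmult)
  also have "\<dots> \<le> 2 * ((ennreal C + 1) * ?pos) + 2 * ((ennreal C + 1) * ?pos)"
    using assms
    by (intro add_mono mult_left_mono nn_integral_same_parity_square_le) (auto simp: evens_def odds_def)
  also have "\<dots> = 4 * (ennreal C + 1) * ?pos"
    by (simp only: distrib_right[symmetric] mult.assoc) simp
  finally show ?thesis .
qed

lemma nn_integral_pos_power_sum_square_le:
  assumes b: "\<And>n. 0 \<le> b n"
    and g_eq: "AE t in \<nu>. g t = (\<Sum>n. b n * t ^ n)"
    and summable: "\<And>t. ereal \<bar>t\<bar> < s_mu \<Longrightarrow> summable (\<lambda>n. \<bar>b n * t ^ n\<bar>)"
  shows "(\<integral>\<^sup>+ t. ennreal ((\<Sum>n\<le>N. b n * \<bar>t\<bar> ^ n) ^ 2) * indicator {0..} t \<partial>\<nu>)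
    \<le> (\<integral>\<^sup>+ t. ennreal ((g t) ^ 2) \<partial>\<nu>)"
proof (rule nn_integral_mono_AE)
  show "AE t in \<nu>. ennreal ((\<Sum>n\<le>N. b n * \<bar>t\<bar> ^ n) ^ 2) * indicator {0..} t \<le> ennreal ((g t) ^ 2)"
    using g_eq AE_abs_less_s_mu
  proof eventually_elim
    case (elim t)
    show ?case
    proof (cases "0 \<le> t")
      case True
      have "(\<Sum>n\<le>N. b n * t ^ n) \<le> (\<Sum>n. b n * t ^ n)"
        using summable_rabs_cancel[OF summable[OF elim(2)]] b True by (intro sum_le_suminf) auto
      moreover have "0 \<le> (\<Sum>n\<le>N. b n * t ^ n)"
        using b True by (intro sum_nonneg) auto
      ultimately show ?thesis
        using True elim(1) by (simp add: power_mono ennreal_leI)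
    qed simp
  qed
qed

lemma nn_integral_abs_power_series_square_finite:
  assumes b: "\<And>n. 0 \<le> b n" and g: "g \<in> L2 \<nu>"
    and g_eq: "AE t in \<nu>. g t = (\<Sum>n. b n * t ^ n)"
    and summable: "\<And>t. ereal \<bar>t\<bar> < s_mu \<Longrightarrow> summable (\<lambda>n. \<bar>b n * t ^ n\<bar>)"
  shows "(\<integral>\<^sup>+ t. ennreal ((\<Sum>n. \<bar>b n * t ^ n\<bar>) ^ 2) \<partial>\<nu>) < \<infinity>"
proof -
  let ?R = "\<lambda>N t. \<Sum>n\<le>N. b n * \<bar>t\<bar> ^ n"
  let ?G = "\<integral>\<^sup>+ t. ennreal ((g t) ^ 2) \<partial>\<nu>"
  have abs_eq: "\<bar>b n * t ^ n\<bar> = b n * \<bar>t\<bar> ^ n" for n t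
    using b by (simp add: abs_mult power_abs)
  have "AE t in \<nu>. (\<lambda>N. ennreal ((?R N t) ^ 2)) \<longlonglongrightarrow> ennreal ((\<Sum>n. \<bar>b n * t ^ n\<bar>) ^ 2)"
    using AE_abs_less_s_mu
  proof eventually_elim
    case (elim t)
    have "(\<lambda>N. ?R N t) \<longlonglongrightarrow> (\<Sum>n. \<bar>b n * t ^ n\<bar>)"
      using summable[OF elim] by (simp add: abs_eq summable_sums sums_def_le[symmetric])
    then show ?case
      by (intro tendsto_ennrealI tendsto_power)
  qed
  then have "(\<integral>\<^sup>+ t. ennreal ((\<Sum>n. \<bar>b n * t ^ n\<bar>) ^ 2) \<partial>\<nu>)
      = (\<integral>\<^sup>+ t. liminf (\<lambda>N. ennreal ((?R N t) ^ 2)) \<partial>\<nu>)"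
    by (intro nn_integral_cong_AE) (auto elim!: eventually_mono intro: lim_imp_Liminf[symmetric])
  also have "\<dots> \<le> liminf (\<lambda>N. \<integral>\<^sup>+ t. ennreal ((?R N t) ^ 2) \<partial>\<nu>)"
    by (rule nn_integral_liminf) simp
  also have "\<dots> \<le> 4 * (ennreal C + 1) * ?G"
  proof (intro Liminf_le always_eventually allI)
    fix N
    have "(\<integral>\<^sup>+ t. ennreal ((?R N t) ^ 2) \<partial>\<nu>)
        \<le> 4 * (ennreal C + 1) * (\<integral>\<^sup>+ t. ennreal ((?R N t) ^ 2) * indicator {0..} t \<partial>\<nu>)"
      using b by (rule nn_integral_abs_power_sum_square_le)
    also have "\<dots> \<le> 4 * (ennreal C + 1) * ?G"
      using b g_eq summable by (intro mult_left_mono nn_integral_pos_power_sum_square_le) auto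
    finally show "(\<integral>\<^sup>+ t. ennreal ((?R N t) ^ 2) \<partial>\<nu>) \<le> 4 * (ennreal C + 1) * ?G" .
  qed simp
  also have "\<dots> < \<infinity>"
    using g by (simp add: L2_def integrable_iff_bounded ennreal_mult_less_top)
  finally show ?thesis .
qed

lemma L2_tendsto_power_sums:
  assumes b: "\<And>n. 0 \<le> b n" and g: "g \<in> L2 \<nu>"
    and g_eq: "AE t in \<nu>. g t = (\<Sum>n. b n * t ^ n)"
    and summable: "\<And>t. ereal \<bar>t\<bar> < s_mu \<Longrightarrow> summable (\<lambda>n. \<bar>b n * t ^ n\<bar>)"
  shows "L2_tendsto \<nu> (\<lambda>N t. \<Sum>n\<le>N. b n * t ^ n) g"
proof -
  define f where "f t = (\<Sum>n. b n * t ^ n)" for t :: real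
  define P where "P t = (\<Sum>n. \<bar>b n * t ^ n\<bar>)" for t :: real
  have [measurable]: "f \<in> borel_measurable borel" "P \<in> borel_measurable borel"
    unfolding f_def P_def by measurable
  have "(\<lambda>N. \<integral>\<^sup>+ t. ennreal (((\<Sum>n\<le>N. b n * t ^ n) - f t) ^ 2) \<partial>\<nu>) \<longlonglongrightarrow> 0"
  proof (rule nn_integral_tendsto_zero_dominated[where w="\<lambda>t. 4 * (P t) ^ 2"])
    show "AE t in \<nu>. ((\<Sum>n\<le>N. b n * t ^ n) - f t) ^ 2 \<le> 4 * (P t) ^ 2" for N
      using AE_abs_less_s_mu
    proof eventually_elim
      case (elim t)
      have "\<bar>(\<Sum>n\<le>N. b n * t ^ n) - f t\<bar> \<le> 2 * P t"
        unfolding f_def P_def using summable[OF elim] by (rule abs_sum_atMost_diff_suminf_le)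
      then have "\<bar>(\<Sum>n\<le>N. b n * t ^ n) - f t\<bar> ^ 2 \<le> (2 * P t) ^ 2"
        by (intro power_mono) auto
      then show ?case
        by (simp add: power_mult_distrib)
    qed
    show "(\<integral>\<^sup>+ t. ennreal (4 * (P t) ^ 2) \<partial>\<nu>) < \<infinity>"
      using nn_integral_abs_power_series_square_finite[OF b g g_eq summable]
      by (simp add: P_def ennreal_mult nn_integral_cmult ennreal_mult_less_top)
    show "AE t in \<nu>. (\<lambda>N. ((\<Sum>n\<le>N. b n * t ^ n) - f t) ^ 2) \<longlonglongrightarrow> 0"
      using AE_abs_less_s_mu
    proof eventually_elim
      case (elim t)
      have "(\<lambda>N. \<Sum>n\<le>N. b n * t ^ n) \<longlonglongrightarrow> f t"
        using summable_rabs_cancel[OF summable[OF elim]]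
        by (simp add: f_def summable_sums sums_def_le[symmetric])
      then have "(\<lambda>N. ((\<Sum>n\<le>N. b n * t ^ n) - f t) ^ 2) \<longlonglongrightarrow> (f t - f t) ^ 2"
        by (intro tendsto_intros)
      then show ?case
        by simp
    qed
  qed simp_all
  moreover have "(\<integral>\<^sup>+ t. ennreal (((\<Sum>n\<le>N. b n * t ^ n) - g t) ^ 2) \<partial>\<nu>)
      = (\<integral>\<^sup>+ t. ennreal (((\<Sum>n\<le>N. b n * t ^ n) - f t) ^ 2) \<partial>\<nu>)" for N
    using g_eq by (intro nn_integral_cong_AE) (auto elim!: eventually_mono simp: f_def)
  ultimately show ?thesis
    using g by (simp add: L2_tendsto_def power_sum_L2)
qed

lemma AE_tendsto_power_series:
  assumes a: "\<And>k n. 0 \<le> a k n"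
    and aL: "\<And>k. L2_tendsto \<nu> (\<lambda>N t. \<Sum>n\<le>N. a k n * t ^ n) (F k)"
    and aD: "\<And>k n x. 0 \<le> x \<Longrightarrow> ereal x < s_mu \<Longrightarrow> a k n * x ^ n \<le> D x"
    and lim: "\<And>n. (\<lambda>k. a k n) \<longlonglongrightarrow> b n"
  shows "AE t in \<nu>. (\<lambda>k. F k t) \<longlonglongrightarrow> (\<Sum>n. b n * t ^ n)"
proof -
  have "AE t in \<nu>. \<forall>k. (\<lambda>n. a k n * t ^ n) sums F k t"
    using a aL by (simp add: AE_all_countable pos_series_AE_sums)
  then show ?thesis
    using AE_abs_less_s_mu
  proof eventually_elim
    case (elim t)
    obtain x where x: "ereal \<bar>t\<bar> < ereal x" "ereal x < s_mu"
      using ereal_dense2[OF elim(2)] by blast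
    then have "(\<lambda>k. \<Sum>n. a k n * t ^ n) \<longlonglongrightarrow> (\<Sum>n. b n * t ^ n)"
      using a lim aD by (intro tendsto_power_series_dominated[where x=x and D="D x"]) auto
    moreover have "(\<Sum>n. a k n * t ^ n) = F k t" for k
      using elim(1) by (simp add: sums_iff)
    ultimately show ?case
      by simp
  qed
qed

lemma L2_limit_power_series:
  assumes "0 < s_mu" and F: "\<And>k. F k \<in> pos_series_set \<nu>" and L: "L2_tendsto \<nu> F g"
  obtains b where "\<And>n. 0 \<le> b n" "\<And>t. ereal \<bar>t\<bar> < s_mu \<Longrightarrow> summable (\<lambda>n. \<bar>b n * t ^ n\<bar>)"
    "AE t in \<nu>. g t = (\<Sum>n. b n * t ^ n)"
proof -
  obtain x0 where "0 < ereal x0" "ereal x0 < s_mu"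
    using ereal_dense2[OF assms(1)] by blast
  then have x0: "0 < x0" "ereal x0 < s_mu"
    by simp_all
  have "\<exists>a. (\<forall>k n. 0 \<le> a k n) \<and> (\<forall>k. L2_tendsto \<nu> (\<lambda>N t. \<Sum>n\<le>N. a k n * t ^ n) (F k))"
    using F by (intro pos_series_set_coeffs)
  then obtain a where a: "\<And>k n. 0 \<le> a k n" and aL: "\<And>k. L2_tendsto \<nu> (\<lambda>N t. \<Sum>n\<le>N. a k n * t ^ n) (F k)"
    by blast
  obtain B where "\<And>k. (\<integral>t. (F k t) ^ 2 \<partial>\<nu>) \<le> B"
    using L2_tendsto_integral_bounded[OF L] by blast
  define D where "D x = sqrt (B / measure \<nu> {x..})" for x
  have aD: "a k n * x ^ n \<le> D x" if "0 \<le> x" "ereal x < s_mu" for k n x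
    unfolding D_def using a aL \<open>\<And>k. (\<integral>t. (F k t) ^ 2 \<partial>\<nu>) \<le> B\<close> that by (rule coeff_power_le)
  have "\<bar>a k n\<bar> \<le> D x0 / x0 ^ n" for k n
    using aD[of x0 k n] a[of k n] x0 by (simp add: field_simps)
  then have "bounded (range (\<lambda>k. a k n))" for n
    by (auto simp: bounded_iff)
  then obtain r b where r: "strict_mono r" and lim: "\<And>n. (\<lambda>j. a (r j) n) \<longlonglongrightarrow> b n"
    using diagonal_convergent_subseq by blast
  have b: "0 \<le> b n" for n
    using a by (intro tendsto_lowerbound[OF lim]) auto
  have bD: "b n * x ^ n \<le> D x" if "0 \<le> x" "ereal x < s_mu" for n x
    using aD[OF that] by (intro tendsto_upperbound[OF tendsto_mult_right[OF lim]]) auto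
  have "AE t in \<nu>. (\<lambda>j. F (r j) t) \<longlonglongrightarrow> (\<Sum>n. b n * t ^ n)"
    using a aL aD lim by (rule AE_tendsto_power_series)
  then have "AE t in \<nu>. g t = (\<Sum>n. b n * t ^ n)"
    by (rule L2_tendsto_AE_limit_eq[OF L2_tendsto_subseq[OF L r]])
  with b bD show ?thesis
    by (intro that summable_abs_power_inside) auto
qed

lemma pos_series_set_closed:
  assumes "\<And>k. F k \<in> pos_series_set \<nu>" "L2_tendsto \<nu> F g"
  shows "g \<in> pos_series_set \<nu>"
proof -
  obtain b where b: "\<And>n. 0 \<le> b n" "\<And>t. ereal \<bar>t\<bar> < s_mu \<Longrightarrow> summable (\<lambda>n. \<bar>b n * t ^ n\<bar>)"
    "AE t in \<nu>. g t = (\<Sum>n. b n * t ^ n)"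
  proof (cases "s_mu = 0")
    case True
    then have "AE t in \<nu>. False"
      using AE_abs_less_s_mu by (auto elim: eventually_mono)
    then show ?thesis
      using True by (intro that[of "\<lambda>_. 0"]) (auto elim: eventually_mono)
  next
    case False
    then have "0 < s_mu"
      using s_mu_nonneg by simp
    with assms that show ?thesis
      using L2_limit_power_series by blast
  qed
  moreover have "g \<in> L2 \<nu>"
    using assms(2) by (simp add: L2_tendsto_def)
  ultimately have "L2_tendsto \<nu> (\<lambda>N t. \<Sum>n\<le>N. b n * t ^ n) g"
    by (intro L2_tendsto_power_sums)
  with b(1) show ?thesis
    unfolding pos_series_set_def by blast
qed

end

theorem corollary1p2:
  fixes \<nu> :: "real measure" and C :: real
  assumes radon: "radon_on_real \<nu>"
    and moments: "\<forall>n::nat. (\<integral>\<^sup>+ t. ennreal (t ^ n) \<partial>(restr_pos \<nu>)) < \<infinity>"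
    and no_mass_at_end: "emeasure (restr_pos \<nu>) {t. 0 \<le> t \<and> supp_sup (restr_pos \<nu>) \<le> ereal t} = 0"
    and C_pos: "C > 0"
    and neg_bound: "\<forall>n::nat. (\<integral>\<^sup>+ t. ennreal (t ^ (2*n)) * indicator {..<0} t \<partial>\<nu>)
                     \<le> ennreal C * (\<integral>\<^sup>+ t. ennreal (t ^ (2*n)) * indicator {0..} t \<partial>\<nu>)"
  shows "(\<forall>f\<in>pos_series_set \<nu>. \<forall>c\<ge>0. (\<lambda>t. c * f t) \<in> pos_series_set \<nu>)
       \<and> (\<forall>f\<in>pos_series_set \<nu>. \<forall>g\<in>pos_series_set \<nu>. \<forall>\<theta>::real. 0 \<le> \<theta> \<and> \<theta> \<le> 1 \<longrightarrow>
            (\<lambda>t. \<theta> * f t + (1 - \<theta>) * g t) \<in> pos_series_set \<nu>)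
       \<and> (\<forall>F g. (\<forall>k. F k \<in> pos_series_set \<nu>) \<and> L2_tendsto \<nu> F g \<longrightarrow> g \<in> pos_series_set \<nu>)"
proof -
  interpret moment_comparison \<nu> C
    using radon moments no_mass_at_end neg_bound by unfold_locales (simp_all add: radon_on_real_def)
  have "(\<lambda>t. c * f t) \<in> pos_series_set \<nu>" if "f \<in> pos_series_set \<nu>" "0 \<le> c" for f c
    using pos_series_set_nonneg_lincomb[OF that(1) that(1) that(2) order.refl] by simp
  moreover have "(\<lambda>t. \<theta> * f t + (1 - \<theta>) * g t) \<in> pos_series_set \<nu>"
    if "f \<in> pos_series_set \<nu>" "g \<in> pos_series_set \<nu>" "0 \<le> \<theta>" "\<theta> \<le> 1" for f g \<theta>
    using that by (intro pos_series_set_nonneg_lincomb) auto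
  ultimately show ?thesis
    using pos_series_set_closed by blast
qed

end
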